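(* Let $V\colon\mathbf{ZZ}\to\mathbf{Vec}$ be an indecomposable zigzag persistence module. Then there exists an integer $t\geq 0$ such that for every even integer $i\ge t$ the map $f_i\colon V_i\to V_{i+1}$ is injective and the map $g_i\colon V_i\to V_{i-1}$ is surjective. Dually, there exists an integer $s\le 0$ such that for every even integer $i\le s$ the map $f_i$ is surjective and $g_i$ is injective.
   Context: Fix a field $\mathbb{F}$; $\mathbf{Vec}$ denotes the category of finite-dimensional $\mathbb{F}$-vector spaces. $\mathbf{ZZ}$ is the category whose objects are the integers, with non-identity morphisms $i\to i-1$ and $i\to i+1$ for every even integer $i$. A zigzag persistence module is a functor $V\colon\mathbf{ZZ}\to\mathbf{Vec}$, with $g_i=V(i\to i-1)\colon V_i\to V_{i-1}$ and $f_i=V(i\to i+1)\colon V_i\to V_{i+1}$ for even $i$. Direct sums are pointwise; $V$ is indecomposable if it is nonzero and there are no nonzero $U,W$ with $V\cong U\oplus W$. *)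

theory Defs
  imports Complex_Main
begin

definition lin_between ::
  "('a::field \<Rightarrow> 'v::ab_group_add \<Rightarrow> 'v) \<Rightarrow> 'v set \<Rightarrow> 'v set \<Rightarrow> ('v \<Rightarrow> 'v) \<Rightarrow> bool" where
  "lin_between scale S T h \<longleftrightarrow>
     h ` S \<subseteq> T \<and>
     (\<forall>x\<in>S. \<forall>y\<in>S. h (x + y) = h x + h y) \<and>
     (\<forall>c. \<forall>x\<in>S. h (scale c x) = scale c (h x))"

definition fd_subspace :: "('a::field \<Rightarrow> 'v::ab_group_add \<Rightarrow> 'v) \<Rightarrow> 'v set \<Rightarrow> bool" where
  "fd_subspace scale S \<longleftrightarrow> module.subspace scale S \<and> (\<exists>B. finite B \<and> module.span scale B = S)"

text \<open>The values of f i, g i outside V i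
  and for odd i are irrelevant.\<close>
definition zz_module ::
  "('a::field \<Rightarrow> 'v::ab_group_add \<Rightarrow> 'v) \<Rightarrow> (int \<Rightarrow> 'v set) \<Rightarrow> (int \<Rightarrow> 'v \<Rightarrow> 'v) \<Rightarrow> (int \<Rightarrow> 'v \<Rightarrow> 'v) \<Rightarrow> bool" where
  "zz_module scale V f g \<longleftrightarrow>
     vector_space scale \<and>
     (\<forall>i. fd_subspace scale (V i)) \<and>
     (\<forall>i. even i \<longrightarrow> lin_between scale (V i) (V (i + 1)) (f i) \<and> lin_between scale (V i) (V (i - 1)) (g i))"

definition zz_submodule ::
  "('a::field \<Rightarrow> 'v::ab_group_add \<Rightarrow> 'v) \<Rightarrow> (int \<Rightarrow> 'v set) \<Rightarrow> (int \<Rightarrow> 'v \<Rightarrow> 'v) \<Rightarrow> (int \<Rightarrow> 'v \<Rightarrow> 'v) \<Rightarrow> (int \<Rightarrow> 'v set) \<Rightarrow> bool" where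
  "zz_submodule scale V f g U \<longleftrightarrow>
     (\<forall>i. module.subspace scale (U i) \<and> U i \<subseteq> V i) \<and>
     (\<forall>i. even i \<longrightarrow> f i ` U i \<subseteq> U (i + 1) \<and> g i ` U i \<subseteq> U (i - 1))"

definition zz_nonzero :: "(int \<Rightarrow> 'v::zero set) \<Rightarrow> bool" where
  "zz_nonzero V \<longleftrightarrow> (\<exists>i. V i \<noteq> {0})"

text \<open>Indecomposable: nonzero, and not an (internal) direct sum of two nonzero submodules.
  Internal direct sum decompositions correspond exactly to isomorphisms V \<cong> U \<oplus> W.\<close>
definition zz_indecomposable ::
  "('a::field \<Rightarrow> 'v::ab_group_add \<Rightarrow> 'v) \<Rightarrow> (int \<Rightarrow> 'v set) \<Rightarrow> (int \<Rightarrow> 'v \<Rightarrow> 'v) \<Rightarrow> (int \<Rightarrow> 'v \<Rightarrow> 'v) \<Rightarrow> bool" where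
  "zz_indecomposable scale V f g \<longleftrightarrow>
     zz_nonzero V \<and>
     \<not> (\<exists>U W. zz_submodule scale V f g U \<and> zz_submodule scale V f g W \<and>
              zz_nonzero U \<and> zz_nonzero W \<and>
              (\<forall>i. U i \<inter> W i = {0} \<and> {u + w | u w. u \<in> U i \<and> w \<in> W i} = V i))"

end

theory Submission
  imports Defs "HOL-Library.Set_Algebras"
begin

(* Suppose that for some even i the map f_i is not injective, or g_i is not onto V (i - 1).
   Put n = i, A = ker f_i and C = 0, resp. n = i - 1, A = V n and C = im g_i.  We split the
   restriction of V to (-oo, n] as P + Q, where P is spanned by the lines through a family
   of vectors x_k that is compatible with the structure maps, x_n lies in A - C, and
   C \<subseteq> Q_n.  The complements Q_k are hyperplanes chosen by descending recursion on k; they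
   exist because x_n is chosen extremal for the filtrations of V_n by the images of 0,
   resp. of all of V_c, under the zigzag relation from c to n (the three cases below:
   x_n dies at an odd index c, x_n is born at an odd index a, or x_n persists forever).
   Extending P by 0 and Q by V above n yields a direct sum decomposition of V, because
   f_n x_n = 0, resp. im g_{n+1} = C \<subseteq> Q_n.  As P is nonzero, indecomposability makes V
   vanish above n, so such failures only occur at bounded indices; reflecting the
   indices gives the statement at -oo. *)

lemma int_downward_choice:
  fixes n :: int
  assumes top: "P n a"
    and step: "\<And>k b. k < n \<Longrightarrow> P (k + 1) b \<Longrightarrow> \<exists>c. P k c \<and> Q k c b"
  shows "\<exists>h. h n = a \<and> (\<forall>k\<le>n. P k (h k)) \<and> (\<forall>k<n. Q k (h k) (h (k + 1)))"
proof -
  have "\<exists>F. \<forall>d. (P (n - int d) (F d) \<and> (d = 0 \<longrightarrow> F d = a))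
               \<and> Q (n - int d - 1) (F (Suc d)) (F d)"
  proof (rule dependent_nat_choice)
    show "\<exists>b. P (n - int 0) b \<and> (0 = (0::nat) \<longrightarrow> b = a)"
      using top by auto
  next
    fix b d assume "P (n - int d) b \<and> (d = 0 \<longrightarrow> b = a)"
    then obtain c where "P (n - int d - 1) c" "Q (n - int d - 1) c b"
      using step[of "n - int d - 1" b] by auto
    then show "\<exists>c. (P (n - int (Suc d)) c \<and> (Suc d = 0 \<longrightarrow> c = a)) \<and> Q (n - int d - 1) c b"
      by (auto simp: algebra_simps)
  qed
  then obtain F where F: "\<And>d. P (n - int d) (F d)" "F 0 = a"
    and FQ: "\<And>d. Q (n - int d - 1) (F (Suc d)) (F d)"
    by blast
  show ?thesis
  proof (intro exI[of _ "\<lambda>k. F (nat (n - k))"] conjI allI impI)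
    show "F (nat (n - n)) = a" using F(2) by simp
  next
    fix k assume "k \<le> n"
    then show "P k (F (nat (n - k)))" using F(1)[of "nat (n - k)"] by simp
  next
    fix k assume "k < n"
    then have "Suc (nat (n - (k + 1))) = nat (n - k)" "n - int (nat (n - (k + 1))) - 1 = k"
      by simp_all
    then show "Q k (F (nat (n - k))) (F (nat (n - (k + 1))))"
      using FQ[of "nat (n - (k + 1))"] by simp
  qed
qed

lemma ex_greatest_int:
  fixes n :: int
  assumes "P c" and "\<And>c. P c \<Longrightarrow> c \<le> n"
  shows "\<exists>m. P m \<and> (\<forall>c. P c \<longrightarrow> c \<le> m)"
proof -
  let ?S = "{c'. P c' \<and> c \<le> c'}"
  have "finite ?S" by (rule finite_subset[of _ "{c..n}"]) (use assms(2) in auto)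
  moreover have "c \<in> ?S" using assms(1) by simp
  ultimately have "Max ?S \<in> ?S" "\<And>c'. c' \<in> ?S \<Longrightarrow> c' \<le> Max ?S"
    using Max_in Max_ge by blast+
  then show ?thesis by (metis (mono_tags, lifting) mem_Collect_eq nle_le order_trans)
qed

lemma set_plus_eq_setcompr: "A + B = {a + b | a b. a \<in> A \<and> b \<in> B}"
  by (auto simp: set_plus_def)

lemma subset_set_plus_left: "(0::'a::comm_monoid_add) \<in> B \<Longrightarrow> A \<subseteq> A + B"
  using set_zero_plus2[of B A] by (simp add: add.commute)

(* For x = 0 the definition forces H = S. *)
definition line_complement ::
  "('a::field \<Rightarrow> 'v::ab_group_add \<Rightarrow> 'v) \<Rightarrow> 'v set \<Rightarrow> 'v \<Rightarrow> 'v set \<Rightarrow> bool" where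
  "line_complement scale S x H \<longleftrightarrow> module.subspace scale H \<and> H \<subseteq> S \<and>
     (x \<noteq> 0 \<longrightarrow> x \<notin> H) \<and> (\<forall>v\<in>S. \<exists>c. v - scale c x \<in> H)"

context vector_space
begin

lemma subspace_set_plus:
  assumes "subspace S" "subspace T" shows "subspace (S + T)"
proof -
  have "S + T = {x + y | x y. x \<in> S \<and> y \<in> T}" by (auto simp: set_plus_def)
  then show ?thesis using subspace_sums[OF assms] by simp
qed

lemma set_plus_subset_subspace: "subspace S \<Longrightarrow> A \<subseteq> S \<Longrightarrow> B \<subseteq> S \<Longrightarrow> A + B \<subseteq> S"
  by (auto elim!: set_plus_elim intro: subspace_add)

lemma notin_set_plus_if_inter_subset:
  assumes "subspace A" "subspace C" "C \<subseteq> A" "x \<in> A" "x \<notin> C" "T \<inter> A \<subseteq> C"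
  shows "x \<notin> T + C"
proof
  assume "x \<in> T + C"
  then obtain t c where tc: "t \<in> T" "c \<in> C" "x = t + c" by (auto elim: set_plus_elim)
  then have "t \<in> A" using assms(1,3,4) subspace_diff[of A x c] by (auto simp: eq_diff_eq)
  then have "t \<in> C" using tc(1) assms(6) by blast
  then show False using tc assms(2,5) subspace_add by blast
qed

lemma lin_between_zero:
  assumes "lin_between scale S T h" "subspace S"
  shows "h 0 = 0"
proof -
  have "h (0 + 0) = h 0 + h 0"
    using assms subspace_0[OF assms(2)] unfolding lin_between_def by blast
  then show ?thesis by simp
qed

lemma lin_between_diff:
  assumes "lin_between scale S T h" "subspace S" "x \<in> S" "y \<in> S"
  shows "h (x - y) = h x - h y"
proof -
  have "h (x - y + y) = h (x - y) + h y"
    using assms subspace_diff[of S x y] unfolding lin_between_def by blast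
  then show ?thesis by (simp add: eq_diff_eq)
qed

lemma subspace_image_lin_between:
  assumes h: "lin_between scale S T h" and "subspace S" "subspace H" "H \<subseteq> S"
  shows "subspace (h ` H)"
  unfolding subspace_def
proof (intro conjI ballI allI)
  have "h 0 = 0" using lin_between_zero[OF h \<open>subspace S\<close>] .
  then show "0 \<in> h ` H" using subspace_0[OF \<open>subspace H\<close>] by force
next
  fix a b assume "a \<in> h ` H" "b \<in> h ` H"
  then obtain u w where uw: "u \<in> H" "w \<in> H" "a = h u" "b = h w" by blast
  moreover have "u \<in> S" "w \<in> S" using uw \<open>H \<subseteq> S\<close> by auto
  ultimately have "a + b = h (u + w)" using h unfolding lin_between_def by simp
  moreover have "u + w \<in> H" using uw subspace_add[OF \<open>subspace H\<close>] by blast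
  ultimately show "a + b \<in> h ` H" by blast
next
  fix c a assume "a \<in> h ` H"
  then obtain u where u: "u \<in> H" "a = h u" by blast
  moreover have "u \<in> S" using u \<open>H \<subseteq> S\<close> by auto
  ultimately have "c *s a = h (c *s u)" using h unfolding lin_between_def by simp
  moreover have "c *s u \<in> H" using u subspace_scale[OF \<open>subspace H\<close>] by blast
  ultimately show "c *s a \<in> h ` H" by blast
qed

lemma subspace_preimage_lin_between:
  assumes "lin_between scale S T h" "subspace S" "subspace H"
  shows "subspace {v \<in> S. h v \<in> H}"
  using assms lin_between_zero[OF assms(1,2)] unfolding subspace_def lin_between_def by auto

lemma image_span_singleton_lin_between:
  assumes "lin_between scale S T h" "x \<in> S"
  shows "h ` span {x} = span {h x}"
proof -
  have "h (c *s x) = c *s h x" for c using assms unfolding lin_between_def by auto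
  then show ?thesis unfolding span_singleton image_image by simp
qed

lemma line_complement_zero: "subspace S \<Longrightarrow> line_complement scale S 0 H \<longleftrightarrow> H = S"
  unfolding line_complement_def by auto

lemma line_complement_exists:
  assumes W: "subspace W" and S: "subspace S" and "W \<subseteq> S" "x \<in> S" "x \<notin> W"
  shows "\<exists>H. W \<subseteq> H \<and> line_complement scale S x H"
proof -
  obtain A where A: "A \<subseteq> W" "independent A" "W \<subseteq> span A"
    by (rule basis_exists[of W])
  have span_A: "span A = W" using span_subspace[OF A(1,3) W] .
  then have "independent (insert x A)" using independent_insertI[OF _ A(2)] \<open>x \<notin> W\<close> by simp
  moreover have "insert x A \<subseteq> S" using A(1) \<open>W \<subseteq> S\<close> \<open>x \<in> S\<close> by blast
  ultimately obtain B where B: "insert x A \<subseteq> B" "B \<subseteq> S" "independent B" "S \<subseteq> span B"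
    using maximal_independent_subset_extend by metis
  define H where "H = span (B - {x})"
  have "x \<notin> A" using \<open>x \<notin> W\<close> A(1) by blast
  then have "W \<subseteq> H" unfolding H_def span_A[symmetric] using B(1) by (intro span_mono) blast
  moreover have "H \<subseteq> S" unfolding H_def using B(2) S by (intro span_minimal) auto
  moreover have "x \<notin> H"
    using B(1,3) unfolding H_def dependent_def by blast
  moreover have "\<exists>c. v - c *s x \<in> H" if "v \<in> S" for v
  proof -
    have "insert x (B - {x}) = B" using B(1) by blast
    then have "v \<in> span (insert x (B - {x}))" using that B(4) by auto
    then show ?thesis unfolding H_def span_breakdown_eq .
  qed
  ultimately show ?thesis unfolding line_complement_def H_def by blast
qed

lemma line_complement_preimage:
  assumes h: "lin_between scale S T h" "subspace S" and x: "x \<in> S"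
    and H': "line_complement scale T y H'"
    and nonzero: "x \<noteq> 0 \<Longrightarrow> h x = y \<and> y \<noteq> 0" and zero: "x = 0 \<Longrightarrow> h ` S \<subseteq> H'"
  shows "line_complement scale S x {v \<in> S. h v \<in> H'}"
  unfolding line_complement_def
proof (intro conjI ballI impI)
  have H'_sub: "subspace H'" and H'_y: "y \<noteq> 0 \<Longrightarrow> y \<notin> H'"
    and H'_dec: "\<And>w. w \<in> T \<Longrightarrow> \<exists>c. w - c *s y \<in> H'"
    using H' by (simp_all add: line_complement_def)
  show "subspace {v \<in> S. h v \<in> H'}" using subspace_preimage_lin_between[OF h H'_sub] .
  show "{v \<in> S. h v \<in> H'} \<subseteq> S" by blast
  show "x \<notin> {v \<in> S. h v \<in> H'}" if "x \<noteq> 0" using nonzero[OF that] H'_y by simp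
  fix v assume v: "v \<in> S"
  show "\<exists>c. v - c *s x \<in> {v \<in> S. h v \<in> H'}"
  proof (cases "x = 0")
    case True
    then show ?thesis using zero v by (intro exI[of _ 0]) auto
  next
    case False
    have "h v \<in> T" using h(1) v unfolding lin_between_def by blast
    then obtain c where c: "h v - c *s y \<in> H'" using H'_dec by blast
    have cx: "c *s x \<in> S" using subspace_scale[OF h(2) x] .
    have "h (v - c *s x) = h v - c *s y"
      using lin_between_diff[OF h v cx] h(1) x nonzero[OF False] unfolding lin_between_def by simp
    then show ?thesis using c v subspace_diff[OF h(2) v cx] by (intro exI[of _ c]) simp
  qed
qed

lemma line_complement_direct_sum:
  assumes "line_complement scale S x H" "subspace S" "x \<in> S"
  shows "span {x} \<inter> H = {0}" and "span {x} + H = S"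
proof -
  have H: "subspace H" "H \<subseteq> S" "x \<noteq> 0 \<Longrightarrow> x \<notin> H" "\<And>v. v \<in> S \<Longrightarrow> \<exists>c. v - c *s x \<in> H"
    using assms(1) unfolding line_complement_def by auto
  show "span {x} \<inter> H = {0}"
  proof (intro equalityI subsetI)
    fix v assume "v \<in> span {x} \<inter> H"
    then obtain c where v: "v = c *s x" "v \<in> H" by (auto simp: span_singleton)
    show "v \<in> {0}"
    proof (cases "c = 0 \<or> x = 0")
      case False
      then have "inverse c *s v = x" using v(1) by simp
      then show ?thesis using False H(1,3) subspace_scale[OF H(1) v(2)] by metis
    qed (use v in auto)
  qed (use H(1) subspace_0 span_zero in auto)
  show "span {x} + H = S"
  proof (intro equalityI subsetI)
    fix v assume "v \<in> span {x} + H"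
    then obtain c h where "v = c *s x + h" "h \<in> H"
      by (auto simp: span_singleton elim!: set_plus_elim)
    then show "v \<in> S" using H(2) assms(2,3) subspace_add subspace_scale by blast
  next
    fix v assume "v \<in> S"
    then obtain c where "v - c *s x \<in> H" using H(4) by blast
    then have "c *s x + (v - c *s x) \<in> span {x} + H"
      by (intro set_plus_intro) (auto simp: span_singleton)
    then show "v \<in> span {x} + H" by simp
  qed
qed

lemma dim_less_if_psubset:
  assumes "subspace T" "T \<subset> U" "U \<subseteq> span B" "finite B"
  shows "dim T < dim U"
proof -
  obtain BU where BU: "BU \<subseteq> U" "independent BU" "U \<subseteq> span BU" "card BU = dim U"
    by (rule basis_exists[of U])
  obtain BT where BT: "BT \<subseteq> T" "independent BT" "T \<subseteq> span BT" "card BT = dim T"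
    by (rule basis_exists[of T])
  obtain v where v: "v \<in> U" "v \<notin> T" using assms(2) by blast
  have "v \<notin> span BT" using span_subspace[OF BT(1,3) assms(1)] v(2) by simp
  then have indep: "independent (insert v BT)" using independent_insertI BT(2) by blast
  have "finite BU" using independent_span_bound[OF assms(4) BU(2)] BU(1) assms(3) by auto
  moreover have "insert v BT \<subseteq> span BU" using BT(1) BU(3) assms(2) v(1) by blast
  ultimately have "finite (insert v BT)" "card (insert v BT) \<le> card BU"
    using independent_span_bound[OF _ indep] by auto
  moreover have "v \<notin> BT" using BT(1) v(2) by blast
  ultimately show ?thesis using BT(4) BU(4) by simp
qed

lemma decreasing_subspaces_stabilize:
  assumes sub: "\<And>m. subspace (S m)" and dec: "\<And>m. S (Suc m) \<subseteq> S m"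
    and "finite B" "S 0 \<subseteq> span B"
  shows "\<exists>m0. \<forall>m\<ge>m0. S m = S m0"
proof -
  have "decseq S" unfolding decseq_Suc_iff using dec by blast
  then have mono: "m0 \<le> m \<Longrightarrow> S m \<subseteq> S m0" for m m0 by (simp add: decseq_def)
  obtain m0 where m0: "\<forall>m. dim (S m0) \<le> dim (S m)"
    using ex_has_least_nat[of "\<lambda>_. True" 0 "\<lambda>m. dim (S m)"] by blast
  have "S m = S m0" if "m0 \<le> m" for m
  proof (rule ccontr)
    assume "S m \<noteq> S m0"
    then have "dim (S m) < dim (S m0)"
      using mono[OF that] mono[of 0 m0] assms(3,4) by (intro dim_less_if_psubset[OF sub]) auto
    then show False using m0 by (meson not_le)
  qed
  then show ?thesis by blast
qed

end

lemma zz_indecomposable_complement_zero: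
  assumes indec: "zz_indecomposable scale V f g"
    and sub: "zz_submodule scale V f g U" "zz_submodule scale V f g W" and "zz_nonzero U"
    and sum: "\<And>i. U i \<inter> W i = {0}" "\<And>i. U i + W i = V i"
  shows "W k = {0}"
proof -
  have "\<not> zz_nonzero W"
  proof
    assume "zz_nonzero W"
    then have "\<exists>U W. zz_submodule scale V f g U \<and> zz_submodule scale V f g W \<and>
        zz_nonzero U \<and> zz_nonzero W \<and>
        (\<forall>i. U i \<inter> W i = {0} \<and> {u + w | u w. u \<in> U i \<and> w \<in> W i} = V i)"
      using sub \<open>zz_nonzero U\<close> sum unfolding set_plus_eq_setcompr
      by (intro exI[of _ U] exI[of _ W]) simp
    then show False using indec unfolding zz_indecomposable_def by (elim conjE notE)
  qed
  then show ?thesis unfolding zz_nonzero_def by blast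
qed

locale zigzag =
  fixes scale :: "'a::field \<Rightarrow> 'v::ab_group_add \<Rightarrow> 'v"
    and V :: "int \<Rightarrow> 'v set" and f g :: "int \<Rightarrow> 'v \<Rightarrow> 'v"
  assumes zz_module: "zz_module scale V f g"
begin

sublocale vector_space scale
  using zz_module unfolding zz_module_def by (rule conjunct1)

notation scale (infixr \<open>*s\<close> 75)

lemma subspace_V: "subspace (V i)"
  using zz_module unfolding zz_module_def fd_subspace_def by blast

lemma finite_span_V: "\<exists>B. finite B \<and> span B = V i"
  using zz_module unfolding zz_module_def fd_subspace_def by blast

lemma lin_f: "even i \<Longrightarrow> lin_between scale (V i) (V (i + 1)) (f i)"
  using zz_module unfolding zz_module_def by blast

lemma lin_g: "even i \<Longrightarrow> lin_between scale (V i) (V (i - 1)) (g i)"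
  using zz_module unfolding zz_module_def by blast

lemma zero_in_V [simp]: "0 \<in> V i"
  using subspace_0[OF subspace_V] .

lemma f_in: "even i \<Longrightarrow> v \<in> V i \<Longrightarrow> f i v \<in> V (i + 1)"
  using lin_f[of i] unfolding lin_between_def by blast

lemma g_in: "even i \<Longrightarrow> v \<in> V i \<Longrightarrow> g i v \<in> V (i - 1)"
  using lin_g[of i] unfolding lin_between_def by blast

lemma f_add: "even i \<Longrightarrow> u \<in> V i \<Longrightarrow> v \<in> V i \<Longrightarrow> f i (u + v) = f i u + f i v"
  using lin_f[of i] unfolding lin_between_def by blast

lemma g_add: "even i \<Longrightarrow> u \<in> V i \<Longrightarrow> v \<in> V i \<Longrightarrow> g i (u + v) = g i u + g i v"
  using lin_g[of i] unfolding lin_between_def by blast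

lemma f_scale: "even i \<Longrightarrow> v \<in> V i \<Longrightarrow> f i (c *s v) = c *s f i v"
  using lin_f[of i] unfolding lin_between_def by blast

lemma g_scale: "even i \<Longrightarrow> v \<in> V i \<Longrightarrow> g i (c *s v) = c *s g i v"
  using lin_g[of i] unfolding lin_between_def by blast

lemma f_zero [simp]: "even i \<Longrightarrow> f i 0 = 0"
  using lin_between_zero[OF lin_f subspace_V] .

lemma g_zero [simp]: "even i \<Longrightarrow> g i 0 = 0"
  using lin_between_zero[OF lin_g subspace_V] .

lemma f_diff: "even i \<Longrightarrow> u \<in> V i \<Longrightarrow> v \<in> V i \<Longrightarrow> f i (u - v) = f i u - f i v"
  using lin_between_diff[OF lin_f subspace_V] .

lemma g_diff: "even i \<Longrightarrow> u \<in> V i \<Longrightarrow> v \<in> V i \<Longrightarrow> g i (u - v) = g i u - g i v"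
  using lin_between_diff[OF lin_g subspace_V] .

definition submodule_upto :: "int \<Rightarrow> (int \<Rightarrow> 'v set) \<Rightarrow> bool" where
  "submodule_upto n U \<longleftrightarrow>
     (\<forall>k\<le>n. subspace (U k) \<and> U k \<subseteq> V k) \<and>
     (\<forall>k. even k \<and> k \<le> n \<longrightarrow> g k ` U k \<subseteq> U (k - 1)) \<and>
     (\<forall>k. even k \<and> k < n \<longrightarrow> f k ` U k \<subseteq> U (k + 1))"

lemma submodule_upto_subspace: "submodule_upto n U \<Longrightarrow> k \<le> n \<Longrightarrow> subspace (U k)"
  and submodule_upto_subset: "submodule_upto n U \<Longrightarrow> k \<le> n \<Longrightarrow> U k \<subseteq> V k"
  and submodule_upto_g: "submodule_upto n U \<Longrightarrow> even k \<Longrightarrow> k \<le> n \<Longrightarrow> g k ` U k \<subseteq> U (k - 1)"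
  and submodule_upto_f: "submodule_upto n U \<Longrightarrow> even k \<Longrightarrow> k < n \<Longrightarrow> f k ` U k \<subseteq> U (k + 1)"
  by (simp_all add: submodule_upto_def)

definition splitting_upto :: "int \<Rightarrow> (int \<Rightarrow> 'v set) \<Rightarrow> (int \<Rightarrow> 'v set) \<Rightarrow> bool" where
  "splitting_upto n P Q \<longleftrightarrow> submodule_upto n P \<and> submodule_upto n Q \<and>
     (\<forall>k\<le>n. P k \<inter> Q k = {0} \<and> P k + Q k = V k)"

lemma splitting_upto_submodules: "splitting_upto n P Q \<Longrightarrow> submodule_upto n P \<and> submodule_upto n Q"
  and splitting_upto_direct: "splitting_upto n P Q \<Longrightarrow> k \<le> n \<Longrightarrow> P k \<inter> Q k = {0} \<and> P k + Q k = V k"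
  by (simp_all add: splitting_upto_def)

definition splits_off_line :: "int \<Rightarrow> 'v \<Rightarrow> 'v set \<Rightarrow> bool" where
  "splits_off_line n x C \<longleftrightarrow> (\<exists>P Q. splitting_upto n P Q \<and> P n = span {x} \<and> C \<subseteq> Q n)"

lemma zz_submodule_extend_zero:
  assumes P: "submodule_upto n P" and top: "even n \<Longrightarrow> f n ` P n \<subseteq> {0}"
  shows "zz_submodule scale V f g (\<lambda>k. if k \<le> n then P k else {0})"
  unfolding zz_submodule_def
proof (intro conjI allI impI)
  fix i :: int
  show "subspace (if i \<le> n then P i else {0})" "(if i \<le> n then P i else {0}) \<subseteq> V i"
    using submodule_upto_subspace[OF P] submodule_upto_subset[OF P] by simp_all
next
  fix i :: int assume i: "even i"
  consider "i < n" | "i = n" | "n < i" by linarith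
  then show "f i ` (if i \<le> n then P i else {0}) \<subseteq> (if i + 1 \<le> n then P (i + 1) else {0})"
  proof cases
    case 1 then show ?thesis using submodule_upto_f[OF P i] by simp
  next
    case 2 then show ?thesis using top i by simp
  next
    case 3 then show ?thesis using i by simp
  qed
  show "g i ` (if i \<le> n then P i else {0}) \<subseteq> (if i - 1 \<le> n then P (i - 1) else {0})"
  proof (cases "i \<le> n")
    case True then show ?thesis using submodule_upto_g[OF P i] by simp
  next
    case False
    then show ?thesis using i subspace_0[OF submodule_upto_subspace[OF P, of "i - 1"]] by simp
  qed
qed

lemma zz_submodule_extend_full:
  assumes Q: "submodule_upto n Q" and top: "odd n \<Longrightarrow> g (n + 1) ` V (n + 1) \<subseteq> Q n"
  shows "zz_submodule scale V f g (\<lambda>k. if k \<le> n then Q k else V k)"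
  unfolding zz_submodule_def
proof (intro conjI allI impI)
  fix i :: int
  show "subspace (if i \<le> n then Q i else V i)" "(if i \<le> n then Q i else V i) \<subseteq> V i"
    using submodule_upto_subspace[OF Q] submodule_upto_subset[OF Q] subspace_V by simp_all
next
  fix i :: int assume i: "even i"
  show "f i ` (if i \<le> n then Q i else V i) \<subseteq> (if i + 1 \<le> n then Q (i + 1) else V (i + 1))"
  proof (cases "i < n")
    case True then show ?thesis using submodule_upto_f[OF Q i] by simp
  next
    case False
    have "(if i \<le> n then Q i else V i) \<subseteq> V i" using submodule_upto_subset[OF Q] by simp
    then have "f i ` (if i \<le> n then Q i else V i) \<subseteq> V (i + 1)" using f_in[OF i] by blast
    with False show ?thesis by simp
  qed
  consider "i \<le> n" | "i = n + 1" | "n + 1 < i" by linarith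
  then show "g i ` (if i \<le> n then Q i else V i) \<subseteq> (if i - 1 \<le> n then Q (i - 1) else V (i - 1))"
  proof cases
    case 1 then show ?thesis using submodule_upto_g[OF Q i] by simp
  next
    case 2
    then have "odd n" using i by simp
    with 2 show ?thesis using top by simp
  next
    case 3
    have "g i ` V i \<subseteq> V (i - 1)" using g_in[OF i] by blast
    with 3 show ?thesis by simp
  qed
qed

lemma vanishes_above_if_splits_off_line:
  assumes indec: "zz_indecomposable scale V f g" and split: "splits_off_line n x C" and "x \<noteq> 0"
    and top_even: "even n \<Longrightarrow> f n x = 0" and top_odd: "odd n \<Longrightarrow> g (n + 1) ` V (n + 1) \<subseteq> C"
    and "n < k"
  shows "V k = {0}"
proof -
  obtain P Q where PQ: "splitting_upto n P Q" "P n = span {x}" "C \<subseteq> Q n"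
    using split unfolding splits_off_line_def by blast
  define U where "U k = (if k \<le> n then P k else {0})" for k
  define W where "W k = (if k \<le> n then Q k else V k)" for k
  have P: "submodule_upto n P" and Q: "submodule_upto n Q"
    using splitting_upto_submodules[OF PQ(1)] by auto
  have x: "x \<in> V n" using submodule_upto_subset[OF P order_refl] PQ(2) span_base[of x "{x}"] by auto
  have "even n \<Longrightarrow> f n ` P n \<subseteq> {0}"
    using top_even image_span_singleton_lin_between[OF lin_f x] PQ(2) by (simp add: span_singleton)
  then have sub_U: "zz_submodule scale V f g U"
    unfolding U_def using zz_submodule_extend_zero[OF P] by simp
  have sub_W: "zz_submodule scale V f g W"
    unfolding W_def using zz_submodule_extend_full[OF Q] top_odd PQ(3) by blast
  have nonzero_U: "zz_nonzero U"
    unfolding zz_nonzero_def U_def using PQ(2) \<open>x \<noteq> 0\<close> span_base[of x "{x}"] by (intro exI[of _ n]) auto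
  have "U i \<inter> W i = {0} \<and> U i + W i = V i" for i
    using splitting_upto_direct[OF PQ(1)] unfolding U_def W_def by (cases "i \<le> n") simp_all
  then have "W k = {0}"
    using zz_indecomposable_complement_zero[OF indec sub_U sub_W nonzero_U] by blast
  then show ?thesis using \<open>n < k\<close> unfolding W_def by simp
qed

end

(* x is nonzero exactly on an interval ending at n.  R collects vectors that the complements
   of the lines through x must contain; its hypotheses are exactly what the descending
   construction of these complements needs. *)
locale line_splitting = zigzag scale V f g
  for scale :: "'a::field \<Rightarrow> 'v::ab_group_add \<Rightarrow> 'v" and V f g +
  fixes n :: int and x :: "int \<Rightarrow> 'v" and R :: "int \<Rightarrow> 'v set" and C :: "'v set"
  assumes x_in_V: "k \<le> n \<Longrightarrow> x k \<in> V k"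
    and g_x: "even k \<Longrightarrow> k \<le> n \<Longrightarrow> g k (x k) = x (k - 1)"
    and f_x: "even k \<Longrightarrow> k < n \<Longrightarrow> x k \<noteq> 0 \<Longrightarrow> f k (x k) = x (k + 1)"
    and x_nonzero_up: "k < n \<Longrightarrow> x k \<noteq> 0 \<Longrightarrow> x (k + 1) \<noteq> 0"
    and x_top: "x n \<noteq> 0" "x n \<notin> R n + C"
    and subspace_C: "subspace C" and C_in_V: "C \<subseteq> V n"
    and subspace_R: "k \<le> n \<Longrightarrow> x k \<noteq> 0 \<Longrightarrow> subspace (R k)"
    and R_in_V: "k \<le> n \<Longrightarrow> x k \<noteq> 0 \<Longrightarrow> R k \<subseteq> V k"
    and f_R: "even k \<Longrightarrow> k < n \<Longrightarrow> x k \<noteq> 0 \<Longrightarrow> f k ` R k \<subseteq> R (k + 1)"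
    and g_preimage_R:
      "even k \<Longrightarrow> k \<le> n \<Longrightarrow> x (k - 1) \<noteq> 0 \<Longrightarrow> v \<in> V k \<Longrightarrow> g k v \<in> R (k - 1) \<Longrightarrow> v \<in> R k"
    and f_V_R: "even k \<Longrightarrow> k < n \<Longrightarrow> x k = 0 \<Longrightarrow> x (k + 1) \<noteq> 0 \<Longrightarrow> f k ` V k \<subseteq> R (k + 1)"
begin

definition admissible :: "int \<Rightarrow> 'v set \<Rightarrow> bool" where
  "admissible k H \<longleftrightarrow>
     line_complement scale (V k) (x k) H \<and> (x k \<noteq> 0 \<longrightarrow> R k \<subseteq> H) \<and> (k = n \<longrightarrow> C \<subseteq> H)"

lemma admissible_top: "\<exists>H. admissible n H"
proof -
  have R: "subspace (R n)" "R n \<subseteq> V n" using subspace_R R_in_V x_top(1) by auto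
  have "R n \<subseteq> R n + C" "C \<subseteq> R n + C"
    using subset_set_plus_left[OF subspace_0[OF subspace_C]] set_zero_plus2[OF subspace_0[OF R(1)]]
    by auto
  moreover obtain H where "R n + C \<subseteq> H" "line_complement scale (V n) (x n) H"
  proof (rule exE[OF line_complement_exists])
    show "subspace (R n + C)" using subspace_set_plus[OF R(1) subspace_C] .
    show "R n + C \<subseteq> V n" using set_plus_subset_subspace[OF subspace_V R(2) C_in_V] .
  qed (use subspace_V x_in_V x_top(2) in auto)
  ultimately show ?thesis unfolding admissible_def by blast
qed

lemma admissible_even_step:
  assumes k: "even k" "k < n" and H': "admissible (k + 1) H'"
  shows "admissible k {v \<in> V k. f k v \<in> H'}"
proof -
  have H'_line: "line_complement scale (V (k + 1)) (x (k + 1)) H'"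
    and H'_R: "x (k + 1) \<noteq> 0 \<Longrightarrow> R (k + 1) \<subseteq> H'"
    using H' unfolding admissible_def by simp_all
  have "f k ` V k \<subseteq> H'" if "x k = 0"
  proof (cases "x (k + 1) = 0")
    case True
    then show ?thesis using H'_line line_complement_zero[OF subspace_V] f_in[OF k(1)] by auto
  next
    case False
    then show ?thesis using f_V_R[OF k that False] H'_R by blast
  qed
  then have "line_complement scale (V k) (x k) {v \<in> V k. f k v \<in> H'}"
    using line_complement_preimage[OF lin_f[OF k(1)] subspace_V x_in_V H'_line]
      f_x[OF k] x_nonzero_up[OF k(2)] k(2) by simp
  moreover have "R k \<subseteq> {v \<in> V k. f k v \<in> H'}" if "x k \<noteq> 0"
    using R_in_V[OF _ that] f_R[OF k that] H'_R[OF x_nonzero_up[OF k(2) that]] k(2) by auto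
  ultimately show ?thesis using k(2) unfolding admissible_def by simp
qed

lemma x_notin_image_plus_R:
  assumes k: "odd k" "k < n" "x k \<noteq> 0" and H': "admissible (k + 1) H'"
  shows "x k \<notin> g (k + 1) ` H' + R k"
proof
  assume "x k \<in> g (k + 1) ` H' + R k"
  then obtain h r where hr: "h \<in> H'" "r \<in> R k" "x k = g (k + 1) h + r"
    by (auto elim!: set_plus_elim)
  have ev: "even (k + 1)" using k(1) by simp
  have H'_sub: "subspace H'" "H' \<subseteq> V (k + 1)"
    and H'_line: "x (k + 1) \<noteq> 0 \<Longrightarrow> x (k + 1) \<notin> H'"
    and H'_R: "x (k + 1) \<noteq> 0 \<Longrightarrow> R (k + 1) \<subseteq> H'"
    using H' unfolding admissible_def line_complement_def by auto
  have x1: "x (k + 1) \<in> V (k + 1)" "x (k + 1) \<noteq> 0"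
    using x_in_V x_nonzero_up k(2,3) by auto
  have h: "h \<in> V (k + 1)" using hr(1) H'_sub(2) by blast
  have "g (k + 1) (x (k + 1) - h) = r"
    using g_diff[OF ev x1(1) h] g_x[OF ev] k(2) hr(3) by simp
  then have "x (k + 1) - h \<in> R (k + 1)"
    using g_preimage_R[OF ev _ _ subspace_diff[OF subspace_V x1(1) h]] k(2,3) hr(2) by simp
  then have "x (k + 1) - h + h \<in> H'"
    using H'_R[OF x1(2)] subspace_add[OF H'_sub(1) _ hr(1)] by blast
  then show False using H'_line x1(2) by simp
qed

lemma admissible_odd_step:
  assumes k: "odd k" "k < n" and H': "admissible (k + 1) H'"
  shows "\<exists>H. admissible k H \<and> g (k + 1) ` H' \<subseteq> H"
proof -
  have ev: "even (k + 1)" using k(1) by simp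
  have H'_sub: "subspace H'" "H' \<subseteq> V (k + 1)"
    using H' unfolding admissible_def line_complement_def by auto
  then have gH': "subspace (g (k + 1) ` H')" "g (k + 1) ` H' \<subseteq> V k"
    using subspace_image_lin_between[OF lin_g[OF ev] subspace_V] g_in[OF ev] by auto
  show ?thesis
  proof (cases "x k = 0")
    case True
    then have "admissible k (V k)"
      using k(2) subspace_V line_complement_zero unfolding admissible_def by simp
    then show ?thesis using gH'(2) by blast
  next
    case False
    have R: "subspace (R k)" "R k \<subseteq> V k" using subspace_R R_in_V k(2) False by auto
    obtain H where H: "g (k + 1) ` H' + R k \<subseteq> H" "line_complement scale (V k) (x k) H"
    proof (rule exE[OF line_complement_exists])
      show "subspace (g (k + 1) ` H' + R k)" using subspace_set_plus[OF gH'(1) R(1)] .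
      show "g (k + 1) ` H' + R k \<subseteq> V k" using set_plus_subset_subspace[OF subspace_V gH'(2) R(2)] .
    qed (use subspace_V x_in_V k(2) x_notin_image_plus_R[OF k False H'] in auto)
    moreover have "g (k + 1) ` H' \<subseteq> g (k + 1) ` H' + R k" "R k \<subseteq> g (k + 1) ` H' + R k"
      using subset_set_plus_left[OF subspace_0[OF R(1)]] set_zero_plus2[OF subspace_0[OF gH'(1)]]
      by auto
    ultimately show ?thesis using k(2) unfolding admissible_def by blast
  qed
qed

lemma submodule_upto_line: "submodule_upto n (\<lambda>k. span {x k})"
  unfolding submodule_upto_def
proof (intro conjI allI impI)
  fix k assume "k \<le> n"
  then show "subspace (span {x k})" "span {x k} \<subseteq> V k"
    using x_in_V span_minimal[of "{x k}" "V k"] subspace_V by auto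
next
  fix k assume k: "even k \<and> k \<le> n"
  then show "g k ` span {x k} \<subseteq> span {x (k - 1)}"
    using image_span_singleton_lin_between[OF lin_g x_in_V] g_x by simp
next
  fix k assume k: "even k \<and> k < n"
  then have "f k ` span {x k} = span {f k (x k)}"
    using image_span_singleton_lin_between[OF lin_f x_in_V] by simp
  then show "f k ` span {x k} \<subseteq> span {x (k + 1)}"
    using f_x k span_zero by (cases "x k = 0") auto
qed

lemma admissible_step:
  assumes "k < n" "admissible (k + 1) H'"
  shows "\<exists>H. admissible k H \<and> (even k \<longrightarrow> f k ` H \<subseteq> H') \<and> (odd k \<longrightarrow> g (k + 1) ` H' \<subseteq> H)"
proof (cases "even k")
  case True
  then show ?thesis using admissible_even_step[OF True assms] by blast
next
  case False
  then show ?thesis using admissible_odd_step[OF _ assms] by auto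
qed

lemma admissible_family:
  "\<exists>H. (\<forall>k\<le>n. admissible k (H k)) \<and>
     (\<forall>k<n. (even k \<longrightarrow> f k ` H k \<subseteq> H (k + 1)) \<and> (odd k \<longrightarrow> g (k + 1) ` H (k + 1) \<subseteq> H k))"
proof -
  obtain Hn where Hn: "admissible n Hn" using admissible_top by blast
  have "\<exists>H. H n = Hn \<and> (\<forall>k\<le>n. admissible k (H k)) \<and>
      (\<forall>k<n. (even k \<longrightarrow> f k ` H k \<subseteq> H (k + 1)) \<and> (odd k \<longrightarrow> g (k + 1) ` H (k + 1) \<subseteq> H k))"
    by (rule int_downward_choice[where P = admissible
        and Q = "\<lambda>k H H'. (even k \<longrightarrow> f k ` H \<subseteq> H') \<and> (odd k \<longrightarrow> g (k + 1) ` H' \<subseteq> H)",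
        OF Hn admissible_step])
  then show ?thesis by (elim exE conjE) (intro exI conjI)
qed

lemma submodule_upto_admissible:
  assumes H: "\<And>k. k \<le> n \<Longrightarrow> admissible k (H k)"
    and f_H: "\<And>k. even k \<Longrightarrow> k < n \<Longrightarrow> f k ` H k \<subseteq> H (k + 1)"
    and g_H: "\<And>k. odd k \<Longrightarrow> k < n \<Longrightarrow> g (k + 1) ` H (k + 1) \<subseteq> H k"
  shows "submodule_upto n H"
  unfolding submodule_upto_def
proof (intro conjI allI impI)
  fix k assume "k \<le> n"
  then show "subspace (H k)" "H k \<subseteq> V k"
    using H unfolding admissible_def line_complement_def by auto
next
  fix k assume "even k \<and> k \<le> n"
  then show "g k ` H k \<subseteq> H (k - 1)" using g_H[of "k - 1"] by simp
qed (use f_H in auto)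

lemma splits_off: "splits_off_line n (x n) C"
proof -
  obtain H where H_all: "\<forall>k\<le>n. admissible k (H k)"
    and H_compat: "\<forall>k<n. (even k \<longrightarrow> f k ` H k \<subseteq> H (k + 1)) \<and>
                          (odd k \<longrightarrow> g (k + 1) ` H (k + 1) \<subseteq> H k)"
    using admissible_family by (elim exE conjE) (rule that)
  have H: "admissible k (H k)" if "k \<le> n" for k
    using H_all that by simp
  have "submodule_upto n H"
    by (rule submodule_upto_admissible) (use H H_compat in simp_all)
  moreover have "span {x k} \<inter> H k = {0} \<and> span {x k} + H k = V k" if "k \<le> n" for k
    using line_complement_direct_sum[of "V k" "x k" "H k"] H[OF that] subspace_V x_in_V[OF that]
    unfolding admissible_def by auto
  moreover have "C \<subseteq> H n" using H[of n] unfolding admissible_def by simp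
  ultimately show ?thesis
    unfolding splits_off_line_def splitting_upto_def using submodule_upto_line by blast
qed

end

context zigzag
begin

(* thread c k y: y is an element of the limit of V restricted to the interval [c, k]. *)
definition thread :: "int \<Rightarrow> int \<Rightarrow> (int \<Rightarrow> 'v) \<Rightarrow> bool" where
  "thread c k y \<longleftrightarrow>
     (\<forall>j. c \<le> j \<and> j \<le> k \<longrightarrow> y j \<in> V j) \<and>
     (\<forall>j. even j \<and> c < j \<and> j \<le> k \<longrightarrow> g j (y j) = y (j - 1)) \<and>
     (\<forall>j. even j \<and> c \<le> j \<and> j < k \<longrightarrow> f j (y j) = y (j + 1))"

lemma thread_in_V: "thread c k y \<Longrightarrow> c \<le> j \<Longrightarrow> j \<le> k \<Longrightarrow> y j \<in> V j"
  and thread_g: "thread c k y \<Longrightarrow> even j \<Longrightarrow> c < j \<Longrightarrow> j \<le> k \<Longrightarrow> g j (y j) = y (j - 1)"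
  and thread_f: "thread c k y \<Longrightarrow> even j \<Longrightarrow> c \<le> j \<Longrightarrow> j < k \<Longrightarrow> f j (y j) = y (j + 1)"
  unfolding thread_def by blast+

lemma thread_add: "thread c k y \<Longrightarrow> thread c k z \<Longrightarrow> thread c k (\<lambda>j. y j + z j)"
  unfolding thread_def using f_add g_add subspace_add[OF subspace_V] by auto

lemma thread_scale: "thread c k y \<Longrightarrow> thread c k (\<lambda>j. a *s y j)"
  unfolding thread_def using f_scale g_scale subspace_scale[OF subspace_V] by auto

lemma thread_zero: "thread c k (\<lambda>j. 0)"
  unfolding thread_def by auto

lemma thread_restrict: "thread c k y \<Longrightarrow> c \<le> c' \<Longrightarrow> k' \<le> k \<Longrightarrow> thread c' k' y"
  unfolding thread_def by auto

lemma thread_const: "w \<in> V k \<Longrightarrow> thread k k (\<lambda>j. w)"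
  unfolding thread_def by auto

lemma thread_extend_up:
  "thread c k y \<Longrightarrow> even k \<Longrightarrow> c \<le> k \<Longrightarrow> thread c (k + 1) (y(k + 1 := f k (y k)))"
  unfolding thread_def using f_in by auto

lemma thread_extend_down:
  assumes y: "thread c (k - 1) y" and k: "even k" "c \<le> k - 1" and v: "v \<in> V k" "g k v = y (k - 1)"
  shows "thread c k (y(k := v))"
  unfolding thread_def
proof (intro conjI allI impI)
  fix j assume "c \<le> j \<and> j \<le> k"
  then show "(y(k := v)) j \<in> V j" using thread_in_V[OF y] v(1) by (cases "j = k") auto
next
  fix j assume j: "even j \<and> c < j \<and> j \<le> k"
  then show "g j ((y(k := v)) j) = (y(k := v)) (j - 1)"
    using thread_g[OF y] v(2) by (cases "j = k") auto
next
  fix j assume j: "even j \<and> c \<le> j \<and> j < k"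
  then have "j + 1 < k" using k(1) by (metis add.commute even_add odd_one zless_imp_add1_zle order_le_less)
  then show "f j ((y(k := v)) j) = (y(k := v)) (j + 1)" using thread_f[OF y] j by auto
qed

lemma thread_extend_below:
  assumes y: "thread c k y" and c: "even c" "c \<le> k"
  shows "thread (c - 1) k (y(c - 1 := g c (y c)))"
  unfolding thread_def
proof (intro conjI allI impI)
  fix j assume "c - 1 \<le> j \<and> j \<le> k"
  then show "(y(c - 1 := g c (y c))) j \<in> V j"
    using thread_in_V[OF y] g_in[OF c(1) thread_in_V[OF y order_refl c(2)]] by (cases "j = c - 1") auto
next
  fix j assume "even j \<and> c - 1 < j \<and> j \<le> k"
  then show "g j ((y(c - 1 := g c (y c))) j) = (y(c - 1 := g c (y c))) (j - 1)"
    using thread_g[OF y] by (cases "j = c") auto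
next
  fix j assume j: "even j \<and> c - 1 \<le> j \<and> j < k"
  then have "c \<le> j" using c(1) by (cases "j = c - 1") auto
  then show "f j ((y(c - 1 := g c (y c))) j) = (y(c - 1 := g c (y c))) (j + 1)"
    using thread_f[OF y] j by auto
qed

lemma thread_cut:
  assumes y: "thread c k y" and j: "c \<le> j" "j \<le> k" "y j = 0"
  shows "thread c' k (\<lambda>l. if l < j then 0 else y l)"
  unfolding thread_def
proof (intro conjI allI impI)
  fix l assume "c' \<le> l \<and> l \<le> k"
  then show "(if l < j then 0 else y l) \<in> V l" using thread_in_V[OF y] j by auto
next
  fix l assume l: "even l \<and> c' < l \<and> l \<le> k"
  then show "g l (if l < j then 0 else y l) = (if l - 1 < j then 0 else y (l - 1))"
    using thread_g[OF y] j by (cases "l < j"; cases "l = j") auto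
next
  fix l assume l: "even l \<and> c' \<le> l \<and> l < k"
  then show "f l (if l < j then 0 else y l) = (if l + 1 < j then 0 else y (l + 1))"
    using thread_f[OF y] j by (cases "l + 1 < j"; cases "l + 1 = j") auto
qed

(* reach c Z k: the image of Z \<subseteq> V c under the zigzag relation from c to k. *)
definition reach :: "int \<Rightarrow> 'v set \<Rightarrow> int \<Rightarrow> 'v set" where
  "reach c Z k = {y k | y. thread c k y \<and> y c \<in> Z}"

lemma reachI: "thread c k y \<Longrightarrow> y c \<in> Z \<Longrightarrow> y k = v \<Longrightarrow> v \<in> reach c Z k"
  unfolding reach_def by blast

lemma reachE:
  assumes "v \<in> reach c Z k"
  obtains y where "thread c k y" "y c \<in> Z" "y k = v"
  using assms unfolding reach_def by blast

lemma subspace_reach: "subspace Z \<Longrightarrow> subspace (reach c Z k)"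
  unfolding subspace_def[of "reach c Z k"]
proof (intro conjI ballI allI)
  assume Z: "subspace Z"
  show "0 \<in> reach c Z k" using thread_zero subspace_0[OF Z] by (intro reachI[of c k "\<lambda>j. 0"]) auto
  fix a b assume "a \<in> reach c Z k" "b \<in> reach c Z k"
  then obtain y z where "thread c k y" "y c \<in> Z" "y k = a" "thread c k z" "z c \<in> Z" "z k = b"
    by (metis reachE)
  then show "a + b \<in> reach c Z k"
    using thread_add subspace_add[OF Z] by (intro reachI[of c k "\<lambda>j. y j + z j"]) auto
next
  fix r a assume Z: "subspace Z" and "a \<in> reach c Z k"
  then obtain y where "thread c k y" "y c \<in> Z" "y k = a" by (metis reachE)
  then show "r *s a \<in> reach c Z k"
    using thread_scale subspace_scale[OF Z] by (intro reachI[of c k "\<lambda>j. r *s y j"]) auto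
qed

lemma reach_subset_V: "c \<le> k \<Longrightarrow> reach c Z k \<subseteq> V k"
  using thread_in_V by (auto elim!: reachE)

lemma reach_f:
  assumes k: "even k" "c \<le> k" and v: "v \<in> reach c Z k"
  shows "f k v \<in> reach c Z (k + 1)"
proof -
  obtain y where y: "thread c k y" "y c \<in> Z" "y k = v" using v by (rule reachE)
  show ?thesis
    using thread_extend_up[OF y(1) k] y k(2) by (intro reachI[of c "k + 1" "y(k + 1 := f k (y k))"]) auto
qed

lemma reach_g_preimage:
  assumes k: "even k" "c \<le> k - 1" and v: "v \<in> V k" "g k v \<in> reach c Z (k - 1)"
  shows "v \<in> reach c Z k"
proof -
  obtain y where y: "thread c (k - 1) y" "y c \<in> Z" "y (k - 1) = g k v" using v(2) by (rule reachE)
  show ?thesis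
    using thread_extend_down[OF y(1) k v(1) y(3)[symmetric]] y k(2) by (intro reachI[of c k "y(k := v)"]) auto
qed

lemma reach_UNIV_top: "reach k UNIV k = V k"
proof
  show "reach k UNIV k \<subseteq> V k" by (rule reach_subset_V) simp
  show "V k \<subseteq> reach k UNIV k"
  proof
    fix w assume "w \<in> V k"
    then show "w \<in> reach k UNIV k" by (intro reachI[OF thread_const]) auto
  qed
qed

lemma reach_zero_top: "reach k {0} k = {0}"
proof
  show "reach k {0} k \<subseteq> {0}" by (auto elim: reachE)
  show "{0} \<subseteq> reach k {0} k" using subspace_0[OF subspace_reach[OF subspace_single_0]] by simp
qed

lemma reach_UNIV_antimono: "c \<le> c' \<Longrightarrow> reach c UNIV k \<subseteq> reach c' UNIV k"
proof
  fix v assume "c \<le> c'" "v \<in> reach c UNIV k"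
  then obtain y where "thread c k y" "y k = v" by (auto elim: reachE)
  then show "v \<in> reach c' UNIV k"
    using thread_restrict[of c k y c' k] \<open>c \<le> c'\<close> by (intro reachI[of c' k y]) auto
qed

lemma reach_mono_set: "Z \<subseteq> Z' \<Longrightarrow> reach c Z k \<subseteq> reach c Z' k"
  unfolding reach_def by blast

lemma reach_zero_if_thread_vanishes:
  assumes y: "thread c k y" and j: "c \<le> j" "j \<le> k" "y j = 0" and "c' \<le> j"
  shows "y k \<in> reach c' {0} k"
proof -
  have "(if c' < j then 0 else y c') = 0" using j(3) \<open>c' \<le> j\<close> by (cases "c' = j") auto
  then show ?thesis
    using thread_cut[OF y j, of c'] j(2) by (intro reachI[of c' k "\<lambda>l. if l < j then 0 else y l"]) auto
qed

lemma reach_zero_mono: "c \<le> c' \<Longrightarrow> c' \<le> k \<Longrightarrow> reach c' {0} k \<subseteq> reach c {0} k"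
proof
  fix v assume "c \<le> c'" "c' \<le> k" "v \<in> reach c' {0} k"
  then obtain y where "thread c' k y" "y c' = 0" "y k = v" by (auto elim: reachE)
  then show "v \<in> reach c {0} k"
    using reach_zero_if_thread_vanishes[of c' k y c' c] \<open>c \<le> c'\<close> \<open>c' \<le> k\<close> by auto
qed

lemma reach_UNIV_extend_below: "even c \<Longrightarrow> c \<le> k \<Longrightarrow> reach c UNIV k \<subseteq> reach (c - 1) UNIV k"
proof
  fix v assume c: "even c" "c \<le> k" and "v \<in> reach c UNIV k"
  then obtain y where "thread c k y" "y k = v" by (auto elim: reachE)
  then show "v \<in> reach (c - 1) UNIV k"
    using thread_extend_below[OF _ c] c(2) by (intro reachI[of "c - 1" k "y(c - 1 := g c (y c))"]) auto
qed

lemma reach_zero_shrink_even: "even c \<Longrightarrow> c < k \<Longrightarrow> reach c {0} k \<subseteq> reach (c + 1) {0} k"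
proof
  fix v assume c: "even c" "c < k" and "v \<in> reach c {0} k"
  then obtain y where y: "thread c k y" "y c = 0" "y k = v" by (auto elim: reachE)
  then have "y (c + 1) = 0" using thread_f[OF y(1) c(1) order_refl c(2)] c(1) by simp
  then show "v \<in> reach (c + 1) {0} k"
    using y thread_restrict[OF y(1), of "c + 1" k] by (intro reachI[of "c + 1" k y]) auto
qed

(* Vectors of V k that die going downwards, resp. that extend arbitrarily far down. *)
definition ephemeral :: "int \<Rightarrow> 'v set" where
  "ephemeral k = (\<Union>c\<in>{..k}. reach c {0} k)"

definition persistent :: "int \<Rightarrow> 'v set" where
  "persistent k = (\<Inter>c\<in>{..k}. reach c UNIV k)"

lemma reach_zero_subset_ephemeral: "c \<le> k \<Longrightarrow> reach c {0} k \<subseteq> ephemeral k"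
  unfolding ephemeral_def by blast

lemma subspace_ephemeral: "subspace (ephemeral k)"
  unfolding subspace_def[of "ephemeral k"]
proof (intro conjI ballI allI)
  show "0 \<in> ephemeral k"
    using reach_zero_subset_ephemeral[of k k] reach_zero_top by auto
  fix a b assume "a \<in> ephemeral k" "b \<in> ephemeral k"
  then obtain c c' where "c \<le> k" "a \<in> reach c {0} k" "c' \<le> k" "b \<in> reach c' {0} k"
    unfolding ephemeral_def by blast
  then have "a \<in> reach (min c c') {0} k" "b \<in> reach (min c c') {0} k" "min c c' \<le> k"
    using reach_zero_mono[of "min c c'" c k] reach_zero_mono[of "min c c'" c' k] by auto
  then show "a + b \<in> ephemeral k"
    using subspace_add[OF subspace_reach[OF subspace_single_0]] reach_zero_subset_ephemeral by blast
next
  fix r a assume "a \<in> ephemeral k"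
  then obtain c where "c \<le> k" "a \<in> reach c {0} k" unfolding ephemeral_def by blast
  then show "r *s a \<in> ephemeral k"
    using subspace_scale[OF subspace_reach[OF subspace_single_0]] reach_zero_subset_ephemeral by blast
qed

lemma ephemeral_subset_V: "ephemeral k \<subseteq> V k"
  unfolding ephemeral_def using reach_subset_V by blast

lemma ephemeral_f: "even k \<Longrightarrow> v \<in> ephemeral k \<Longrightarrow> f k v \<in> ephemeral (k + 1)"
  unfolding ephemeral_def using reach_f by fastforce

lemma ephemeral_g_preimage:
  "even k \<Longrightarrow> v \<in> V k \<Longrightarrow> g k v \<in> ephemeral (k - 1) \<Longrightarrow> v \<in> ephemeral k"
  unfolding ephemeral_def using reach_g_preimage by fastforce

lemma persistent_eq_reach: "\<exists>c\<le>k. persistent k = reach c UNIV k"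
proof -
  obtain B where B: "finite B" "span B = V k" using finite_span_V by blast
  obtain m0 where m0: "\<And>m. m0 \<le> m \<Longrightarrow> reach (k - int m) UNIV k = reach (k - int m0) UNIV k"
  proof -
    have "\<exists>m0. \<forall>m\<ge>m0. reach (k - int m) UNIV k = reach (k - int m0) UNIV k"
    proof (rule decreasing_subspaces_stabilize[OF subspace_reach[OF subspace_UNIV] _ B(1)])
      show "reach (k - int (Suc m)) UNIV k \<subseteq> reach (k - int m) UNIV k" for m
        by (rule reach_UNIV_antimono) simp
      show "reach (k - int 0) UNIV k \<subseteq> span B" using B(2) reach_subset_V[of k k] by simp
    qed
    then show ?thesis using that by blast
  qed
  define c1 where "c1 = k - int m0"
  have "reach c1 UNIV k \<subseteq> reach c UNIV k" if "c \<le> k" for c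
  proof (cases "c \<le> c1")
    case True
    then have "reach c UNIV k = reach c1 UNIV k"
      using m0[of "nat (k - c)"] that unfolding c1_def by simp
    then show ?thesis by simp
  qed (simp add: reach_UNIV_antimono)
  then have "persistent k = reach c1 UNIV k"
    unfolding persistent_def c1_def by (auto simp del: of_nat_diff)
  then show ?thesis unfolding c1_def by (intro exI[of _ c1]) (simp add: c1_def)
qed

lemma persistent_subset_V: "persistent k \<subseteq> V k"
  unfolding persistent_def using reach_subset_V[of k k] by blast

lemma persistent_g: "even k \<Longrightarrow> v \<in> persistent k \<Longrightarrow> g k v \<in> persistent (k - 1)"
  unfolding persistent_def
proof (intro INT_I)
  fix c assume k: "even k" and v: "v \<in> (\<Inter>c\<in>{..k}. reach c UNIV k)" and c: "c \<in> {..k - 1}"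
  then have "v \<in> reach c UNIV k" by auto
  then obtain y where y: "thread c k y" "y k = v" by (auto elim: reachE)
  then have "g k v = y (k - 1)" using thread_g[OF y(1) k] c by auto
  then show "g k v \<in> reach c UNIV (k - 1)"
    using thread_restrict[OF y(1), of c "k - 1"] by (intro reachI[of c "k - 1" y]) auto
qed

lemma persistent_f_surj:
  assumes k: "even k" and w: "w \<in> persistent (k + 1)"
  shows "\<exists>v\<in>persistent k. f k v = w"
proof -
  obtain c where c: "c \<le> k" "persistent k = reach c UNIV k" using persistent_eq_reach by blast
  have "w \<in> reach c UNIV (k + 1)" using w c(1) unfolding persistent_def by auto
  then obtain y where y: "thread c (k + 1) y" "y (k + 1) = w" by (auto elim: reachE)
  have "y k \<in> persistent k"
    unfolding c(2) using thread_restrict[OF y(1), of c k] by (intro reachI[of c k y]) auto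
  moreover have "f k (y k) = w" using thread_f[OF y(1) k c(1)] y(2) by simp
  ultimately show ?thesis by blast
qed

lemma persistent_thread:
  assumes "x0 \<in> persistent n"
  shows "\<exists>z. z n = x0 \<and> (\<forall>c. thread c n z)"
proof -
  have "\<exists>z. z n = x0 \<and> (\<forall>k\<le>n. z k \<in> persistent k) \<and>
      (\<forall>k<n. (even k \<longrightarrow> f k (z k) = z (k + 1)) \<and> (odd k \<longrightarrow> g (k + 1) (z (k + 1)) = z k))"
  proof (rule int_downward_choice[where P = "\<lambda>k v. v \<in> persistent k"
        and Q = "\<lambda>k v w. (even k \<longrightarrow> f k v = w) \<and> (odd k \<longrightarrow> g (k + 1) w = v)"])
    show "x0 \<in> persistent n" by (rule assms)
  next
    fix k w assume w: "w \<in> persistent (k + 1)"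
    show "\<exists>v. v \<in> persistent k \<and> (even k \<longrightarrow> f k v = w) \<and> (odd k \<longrightarrow> g (k + 1) w = v)"
    proof (cases "even k")
      case True
      then show ?thesis using persistent_f_surj[OF True w] by blast
    next
      case False
      then show ?thesis using persistent_g[of "k + 1" w] w by auto
    qed
  qed
  then obtain z where z: "z n = x0" "\<forall>k\<le>n. z k \<in> persistent k"
    and z_compat: "\<forall>k<n. (even k \<longrightarrow> f k (z k) = z (k + 1)) \<and> (odd k \<longrightarrow> g (k + 1) (z (k + 1)) = z k)"
    by (elim exE conjE) (rule that)
  have "thread c n z" for c
    unfolding thread_def
  proof (intro conjI allI impI)
    fix j assume "c \<le> j \<and> j \<le> n"
    then show "z j \<in> V j" using z(2) persistent_subset_V by auto
  next
    fix j assume "even j \<and> c < j \<and> j \<le> n"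
    then have "odd (j - 1)" "j - 1 < n" by auto
    then show "g j (z j) = z (j - 1)" using z_compat[rule_format, of "j - 1"] by simp
  next
    fix j assume "even j \<and> c \<le> j \<and> j < n"
    then show "f j (z j) = z (j + 1)" using z_compat[rule_format, of j] by simp
  qed
  then show ?thesis using z(1) by blast
qed

lemma line_splitting_reach:
  assumes a: "odd a" "a \<le> n" and z: "thread a n z" and z_nonzero: "\<And>j. a \<le> j \<Longrightarrow> j \<le> n \<Longrightarrow> z j \<noteq> 0"
    and top: "z n \<notin> reach (a - 1) UNIV n + C" and C: "subspace C" "C \<subseteq> V n"
  shows "line_splitting scale V f g n (\<lambda>k. if a \<le> k then z k else 0) (reach (a - 1) UNIV) C"
proof -
  define x where "x k = (if a \<le> k then z k else 0)" for k
  have x_nonzero: "x k \<noteq> 0 \<longleftrightarrow> a \<le> k" if "k \<le> n" for k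
    using z_nonzero that unfolding x_def by auto
  have "line_splitting scale V f g n x (reach (a - 1) UNIV) C"
  proof (intro line_splitting.intro line_splitting_axioms.intro)
    show "zigzag scale V f g" by (rule zigzag_axioms)
    show "x k \<in> V k" if "k \<le> n" for k
      using thread_in_V[OF z _ that] unfolding x_def by auto
    show "g k (x k) = x (k - 1)" if k: "even k" "k \<le> n" for k
    proof (cases "a \<le> k")
      case True
      then have "a < k" using a(1) k(1) by (cases "a = k") auto
      then show ?thesis using thread_g[OF z k(1) _ k(2)] unfolding x_def by simp
    qed (use k(1) x_def in simp)
    show "f k (x k) = x (k + 1)" if k: "even k" "k < n" "x k \<noteq> 0" for k
      using thread_f[OF z k(1) _ k(2)] x_nonzero k unfolding x_def by simp
    show "x (k + 1) \<noteq> 0" if "k < n" "x k \<noteq> 0" for k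
      using x_nonzero[of k] x_nonzero[of "k + 1"] that by simp
    show "x n \<noteq> 0" using x_nonzero a(2) by simp
    show "x n \<notin> reach (a - 1) UNIV n + C" using top a(2) unfolding x_def by simp
    show "subspace C" "C \<subseteq> V n" using C by auto
    show "subspace (reach (a - 1) UNIV k)" for k
      by (rule subspace_reach[OF subspace_UNIV])
    show "reach (a - 1) UNIV k \<subseteq> V k" if "k \<le> n" "x k \<noteq> 0" for k
      using reach_subset_V x_nonzero that by simp
    show "f k ` reach (a - 1) UNIV k \<subseteq> reach (a - 1) UNIV (k + 1)"
      if "even k" "k < n" "x k \<noteq> 0" for k
      using reach_f[OF that(1)] x_nonzero that by auto
    show "v \<in> reach (a - 1) UNIV k"
      if "even k" "k \<le> n" "x (k - 1) \<noteq> 0" "v \<in> V k" "g k v \<in> reach (a - 1) UNIV (k - 1)" for k v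
      using reach_g_preimage[OF that(1) _ that(4,5)] x_nonzero[of "k - 1"] that(2,3) by simp
    show "f k ` V k \<subseteq> reach (a - 1) UNIV (k + 1)"
      if "even k" "k < n" "x k = 0" "x (k + 1) \<noteq> 0" for k
    proof -
      have "a - 1 = k" using x_nonzero[of k] x_nonzero[of "k + 1"] that by simp
      then show ?thesis using reach_f[OF that(1) order_refl] reach_UNIV_top by auto
    qed
  qed
  then show ?thesis unfolding x_def .
qed

lemma splits_off_line_reach:
  assumes a: "odd a" "a \<le> n" and x0: "x0 \<in> reach a UNIV n" "x0 \<notin> reach (a - 1) UNIV n + C"
    and C: "subspace C" "C \<subseteq> V n"
  shows "splits_off_line n x0 C"
proof -
  obtain z where z: "thread a n z" "z n = x0" using x0(1) by (auto elim: reachE)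
  have z_nonzero: "z j \<noteq> 0" if "a \<le> j" "j \<le> n" for j
  proof
    assume "z j = 0"
    then have "x0 \<in> reach (a - 1) UNIV n"
      using reach_zero_if_thread_vanishes[OF z(1) that, of "a - 1"] reach_mono_set[of "{0}" UNIV] z(2)
        that(1)
      by auto
    then show False using x0(2) subset_set_plus_left[OF subspace_0[OF C(1)]] by blast
  qed
  interpret L: line_splitting scale V f g n "\<lambda>k. if a \<le> k then z k else 0" "reach (a - 1) UNIV" C
    by (rule line_splitting_reach[OF a z(1) z_nonzero _ C]) (use x0(2) z(2) in simp_all)
  show ?thesis using L.splits_off z(2) a(2) by simp
qed

lemma line_splitting_reach_zero:
  assumes c: "odd c" "c < n" and z: "thread c n z" "z c = 0"
    and z_nonzero: "\<And>j. c < j \<Longrightarrow> j \<le> n \<Longrightarrow> z j \<noteq> 0"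
    and top: "z n \<notin> reach (c + 1) {0} n + C" and C: "subspace C" "C \<subseteq> V n"
  shows "line_splitting scale V f g n (\<lambda>k. if c < k then z k else 0) (reach (c + 1) {0}) C"
proof -
  define x where "x k = (if c < k then z k else 0)" for k
  have x_nonzero: "x k \<noteq> 0 \<longleftrightarrow> c < k" if "k \<le> n" for k
    using z_nonzero that unfolding x_def by auto
  have "line_splitting scale V f g n x (reach (c + 1) {0}) C"
  proof (intro line_splitting.intro line_splitting_axioms.intro)
    show "zigzag scale V f g" by (rule zigzag_axioms)
    show "x k \<in> V k" if "k \<le> n" for k
      using thread_in_V[OF z(1) _ that] unfolding x_def by auto
    show "g k (x k) = x (k - 1)" if k: "even k" "k \<le> n" for k
    proof (cases "c < k")
      case True
      then have "g k (x k) = z (k - 1)" using thread_g[OF z(1) k(1) _ k(2)] unfolding x_def by simp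
      also have "z (k - 1) = x (k - 1)" using z(2) True unfolding x_def by (cases "c = k - 1") auto
      finally show ?thesis .
    qed (use k(1) x_def in simp)
    show "f k (x k) = x (k + 1)" if k: "even k" "k < n" "x k \<noteq> 0" for k
      using thread_f[OF z(1) k(1) _ k(2)] x_nonzero k unfolding x_def by simp
    show "x (k + 1) \<noteq> 0" if "k < n" "x k \<noteq> 0" for k
      using x_nonzero[of k] x_nonzero[of "k + 1"] that by simp
    show "x n \<noteq> 0" using x_nonzero c(2) by simp
    show "x n \<notin> reach (c + 1) {0} n + C" using top c(2) unfolding x_def by simp
    show "subspace C" "C \<subseteq> V n" using C by auto
    show "subspace (reach (c + 1) {0} k)" for k
      by (rule subspace_reach[OF subspace_single_0])
    show "reach (c + 1) {0} k \<subseteq> V k" if "k \<le> n" "x k \<noteq> 0" for k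
      using reach_subset_V x_nonzero that by simp
    show "f k ` reach (c + 1) {0} k \<subseteq> reach (c + 1) {0} (k + 1)"
      if "even k" "k < n" "x k \<noteq> 0" for k
      using reach_f[OF that(1)] x_nonzero that by auto
    show "v \<in> reach (c + 1) {0} k"
      if "even k" "k \<le> n" "x (k - 1) \<noteq> 0" "v \<in> V k" "g k v \<in> reach (c + 1) {0} (k - 1)" for k v
      using reach_g_preimage[OF that(1) _ that(4,5)] x_nonzero[of "k - 1"] that(2,3) by simp
    show "f k ` V k \<subseteq> reach (c + 1) {0} (k + 1)"
      if "even k" "k < n" "x k = 0" "x (k + 1) \<noteq> 0" for k
    proof -
      have "c = k" using x_nonzero[of k] x_nonzero[of "k + 1"] that by simp
      then show ?thesis using c(1) that(1) by simp
    qed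
  qed
  then show ?thesis unfolding x_def .
qed

lemma splits_off_line_reach_zero:
  assumes c: "odd c" "c < n" and x0: "x0 \<in> reach c {0} n" "x0 \<notin> reach (c + 1) {0} n + C"
    and C: "subspace C" "C \<subseteq> V n"
  shows "splits_off_line n x0 C"
proof -
  obtain z where z: "thread c n z" "z c = 0" "z n = x0" using x0(1) by (auto elim: reachE)
  have z_nonzero: "z j \<noteq> 0" if "c < j" "j \<le> n" for j
  proof
    assume "z j = 0"
    then have "x0 \<in> reach (c + 1) {0} n"
      using reach_zero_if_thread_vanishes[OF z(1) _ that(2), of "c + 1"] z(3) that(1) by simp
    then show False using x0(2) subset_set_plus_left[OF subspace_0[OF C(1)]] by blast
  qed
  interpret L: line_splitting scale V f g n "\<lambda>k. if c < k then z k else 0" "reach (c + 1) {0}" C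
    by (rule line_splitting_reach_zero[OF c z(1,2) z_nonzero _ C]) (use x0(2) z(3) in simp_all)
  show ?thesis using L.splits_off z(3) c(2) by simp
qed

lemma line_splitting_persistent:
  assumes z: "\<And>c. thread c n z" and z_nonzero: "\<And>j. j \<le> n \<Longrightarrow> z j \<noteq> 0"
    and top: "z n \<notin> ephemeral n + C" and C: "subspace C" "C \<subseteq> V n"
  shows "line_splitting scale V f g n z ephemeral C"
proof (intro line_splitting.intro line_splitting_axioms.intro)
  show "zigzag scale V f g" by (rule zigzag_axioms)
  show "z k \<in> V k" if "k \<le> n" for k using thread_in_V[OF z order_refl that] .
  show "g k (z k) = z (k - 1)" if "even k" "k \<le> n" for k
    using thread_g[OF z that(1) _ that(2), of "k - 1"] by simp
  show "f k (z k) = z (k + 1)" if "even k" "k < n" "z k \<noteq> 0" for k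
    using thread_f[OF z that(1) order_refl that(2)] .
  show "z (k + 1) \<noteq> 0" if "k < n" "z k \<noteq> 0" for k using z_nonzero that(1) by simp
  show "z n \<noteq> 0" using z_nonzero by simp
  show "z n \<notin> ephemeral n + C" by (rule top)
  show "subspace C" "C \<subseteq> V n" using C by auto
  show "subspace (ephemeral k)" for k by (rule subspace_ephemeral)
  show "ephemeral k \<subseteq> V k" for k by (rule ephemeral_subset_V)
  show "f k ` ephemeral k \<subseteq> ephemeral (k + 1)" if "even k" for k
    using ephemeral_f[OF that] by blast
  show "v \<in> ephemeral k" if "even k" "v \<in> V k" "g k v \<in> ephemeral (k - 1)" for k v
    by (rule ephemeral_g_preimage[OF that])
  show "f k ` V k \<subseteq> ephemeral (k + 1)" if "k < n" "z k = 0" for k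
    using z_nonzero that by simp
qed

lemma splits_off_line_persistent:
  assumes x0: "x0 \<in> persistent n" "x0 \<notin> ephemeral n + C"
    and C: "subspace C" "C \<subseteq> V n"
  shows "splits_off_line n x0 C"
proof -
  obtain z where z: "z n = x0" "\<And>c. thread c n z" using persistent_thread[OF x0(1)] by blast
  have z_nonzero: "z j \<noteq> 0" if "j \<le> n" for j
  proof
    assume "z j = 0"
    then have "x0 \<in> reach j {0} n" using reach_zero_if_thread_vanishes[OF z(2) order_refl that] z(1) by simp
    then show False
      using x0(2) reach_zero_subset_ephemeral[OF that] subset_set_plus_left[OF subspace_0[OF C(1)]]
      by blast
  qed
  have top: "z n \<notin> ephemeral n + C" using x0(2) unfolding z(1) .
  interpret L: line_splitting scale V f g n z ephemeral C
    using line_splitting_persistent[OF z(2) z_nonzero top C] .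
  show ?thesis using L.splits_off z(1) by simp
qed

lemma exists_splits_off_line_reach_zero:
  assumes A: "subspace A" "A \<subseteq> V n" and C: "subspace C" "C \<subseteq> A"
    and c: "c \<le> n" "\<not> reach c {0} n \<inter> A \<subseteq> C"
  shows "\<exists>x0\<in>A - C. splits_off_line n x0 C"
proof -
  let ?P = "\<lambda>c. c \<le> n \<and> \<not> reach c {0} n \<inter> A \<subseteq> C"
  obtain c0 where c0: "?P c0" and greatest: "\<And>c. ?P c \<Longrightarrow> c \<le> c0"
    using ex_greatest_int[of ?P c n] c by blast
  have "c0 \<noteq> n" using c0 reach_zero_top subspace_0[OF C(1)] by auto
  then have "c0 < n" using c0 by simp
  have "odd c0"
  proof
    assume "even c0"
    then have "?P (c0 + 1)" using c0 reach_zero_shrink_even[OF _ \<open>c0 < n\<close>] \<open>c0 < n\<close> by auto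
    then show False using greatest by fastforce
  qed
  have "reach (c0 + 1) {0} n \<inter> A \<subseteq> C" using greatest[of "c0 + 1"] \<open>c0 < n\<close> by fastforce
  moreover obtain x0 where x0: "x0 \<in> reach c0 {0} n" "x0 \<in> A" "x0 \<notin> C" using c0 by blast
  ultimately have "x0 \<notin> reach (c0 + 1) {0} n + C"
    using notin_set_plus_if_inter_subset[OF A(1) C x0(2,3)] by blast
  then show ?thesis
    using splits_off_line_reach_zero[OF \<open>odd c0\<close> \<open>c0 < n\<close> x0(1)] C A(2) x0(2,3) by blast
qed

lemma exists_splits_off_line_reach:
  assumes A: "subspace A" "A \<subseteq> V n" and C: "subspace C" "C \<subseteq> A" and "\<not> A \<subseteq> C"
    and persistent: "persistent n \<inter> A \<subseteq> C"
  shows "\<exists>x0\<in>A - C. splits_off_line n x0 C"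
proof -
  let ?P = "\<lambda>c. reach c UNIV n \<inter> A \<subseteq> C"
  obtain c1 where "c1 \<le> n" "persistent n = reach c1 UNIV n" using persistent_eq_reach by blast
  then have "?P c1" using persistent by simp
  moreover have "c < n" if "?P c" for c
  proof (rule ccontr)
    assume "\<not> c < n"
    then have "V n \<subseteq> reach c UNIV n" by (metis reach_UNIV_top reach_UNIV_antimono not_less)
    then show False using that A(2) \<open>\<not> A \<subseteq> C\<close> by blast
  qed
  ultimately obtain b where b: "?P b" and greatest: "\<And>c. ?P c \<Longrightarrow> c \<le> b"
    using ex_greatest_int[of ?P c1 n] by force
  define a where "a = b + 1"
  \<comment> \<open>the lowest index from which some vector of A - C is reached\<close>
  have "a \<le> n" using b \<open>\<And>c. ?P c \<Longrightarrow> c < n\<close> unfolding a_def by force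
  have not_Pa: "\<not> ?P a" using greatest[of a] unfolding a_def by force
  have "odd a"
  proof
    assume "even a"
    then have "?P a" using b reach_UNIV_extend_below[OF _ \<open>a \<le> n\<close>] unfolding a_def by force
    then show False using not_Pa by contradiction
  qed
  obtain x0 where x0: "x0 \<in> reach a UNIV n" "x0 \<in> A" "x0 \<notin> C" using not_Pa by blast
  have "x0 \<notin> reach (a - 1) UNIV n + C"
    using notin_set_plus_if_inter_subset[OF A(1) C x0(2,3)] b unfolding a_def by simp
  then show ?thesis
    using splits_off_line_reach[OF \<open>odd a\<close> \<open>a \<le> n\<close> x0(1)] C A(2) x0(2,3) by blast
qed

lemma exists_splits_off_line:
  assumes A: "subspace A" "A \<subseteq> V n" and C: "subspace C" "C \<subseteq> A" and "\<not> A \<subseteq> C"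
  shows "\<exists>x0\<in>A - C. splits_off_line n x0 C"
proof (cases "\<exists>c\<le>n. \<not> reach c {0} n \<inter> A \<subseteq> C")
  case True
  then show ?thesis using exists_splits_off_line_reach_zero[OF A C] by blast
next
  case False
  then have ephemeral: "ephemeral n \<inter> A \<subseteq> C" unfolding ephemeral_def by blast
  show ?thesis
  proof (cases "persistent n \<inter> A \<subseteq> C")
    case True
    then show ?thesis using exists_splits_off_line_reach[OF A C \<open>\<not> A \<subseteq> C\<close>] by blast
  next
    case False
    then obtain x0 where x0: "x0 \<in> persistent n" "x0 \<in> A" "x0 \<notin> C" by blast
    have "x0 \<notin> ephemeral n + C"
      using notin_set_plus_if_inter_subset[OF A(1) C x0(2,3) ephemeral] .
    then show ?thesis using splits_off_line_persistent[OF x0(1)] C A(2) x0(2,3) by blast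
  qed
qed

lemma vanishes_above_if_not_inj:
  assumes indec: "zz_indecomposable scale V f g" and i: "even i" and "\<not> inj_on (f i) (V i)"
    and "i < k"
  shows "V k = {0}"
proof -
  let ?A = "{v \<in> V i. f i v \<in> {0}}"
  obtain u w where uw: "u \<in> V i" "w \<in> V i" "f i u = f i w" "u \<noteq> w"
    using \<open>\<not> inj_on (f i) (V i)\<close> unfolding inj_on_def by blast
  have "u - w \<in> ?A" using uw f_diff[OF i] subspace_diff[OF subspace_V] by simp
  then have "\<not> ?A \<subseteq> {0}" using uw(4) by auto
  moreover have "subspace ?A"
    using subspace_preimage_lin_between[OF lin_f[OF i] subspace_V subspace_single_0] .
  moreover have "?A \<subseteq> V i" "{0} \<subseteq> ?A" using i by auto
  ultimately obtain x0 where x0: "x0 \<in> ?A - {0}" "splits_off_line i x0 {0}"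
    using exists_splits_off_line[of ?A i "{0}"] by auto
  show ?thesis
    by (rule vanishes_above_if_splits_off_line[OF indec x0(2) _ _ _ \<open>i < k\<close>]) (use x0(1) i in auto)
qed

lemma vanishes_above_if_not_surj:
  assumes indec: "zz_indecomposable scale V f g" and i: "even i" and "g i ` V i \<noteq> V (i - 1)"
    and "i \<le> k"
  shows "V k = {0}"
proof -
  have C: "subspace (g i ` V i)" "g i ` V i \<subseteq> V (i - 1)"
    using subspace_image_lin_between[OF lin_g[OF i] subspace_V subspace_V] g_in[OF i] by auto
  then have "\<not> V (i - 1) \<subseteq> g i ` V i" using \<open>g i ` V i \<noteq> V (i - 1)\<close> by blast
  then obtain x0 where x0: "x0 \<in> V (i - 1) - g i ` V i" "splits_off_line (i - 1) x0 (g i ` V i)"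
    using exists_splits_off_line[OF subspace_V order_refl C] by auto
  have "x0 \<noteq> 0" using x0(1) subspace_0[OF C(1)] by auto
  show ?thesis
    by (rule vanishes_above_if_splits_off_line[OF indec x0(2) \<open>x0 \<noteq> 0\<close>]) (use i \<open>i \<le> k\<close> in auto)
qed

lemma eventually_inj_surj:
  assumes indec: "zz_indecomposable scale V f g"
  shows "\<exists>t\<ge>0. \<forall>i. even i \<and> i \<ge> t \<longrightarrow> inj_on (f i) (V i) \<and> g i ` V i = V (i - 1)"
proof (cases "\<forall>i. even i \<and> 0 \<le> i \<longrightarrow> inj_on (f i) (V i) \<and> g i ` V i = V (i - 1)")
  case True
  then show ?thesis by (intro exI[of _ 0] conjI order_refl)
next
  case False
  then obtain i where "\<not> (even i \<and> 0 \<le> i \<longrightarrow> inj_on (f i) (V i) \<and> g i ` V i = V (i - 1))"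
    unfolding not_all by (rule exE)
  then have i: "even i" "0 \<le> i" "\<not> (inj_on (f i) (V i) \<and> g i ` V i = V (i - 1))"
    by simp_all
  have vanish: "V k = {0}" if "i < k" for k
  proof (cases "inj_on (f i) (V i)")
    case False
    show ?thesis using vanishes_above_if_not_inj[OF indec i(1) False that] .
  next
    case True
    then have "g i ` V i \<noteq> V (i - 1)" using i(3) by simp
    then show ?thesis using vanishes_above_if_not_surj[OF indec i(1)] that by (meson less_imp_le)
  qed
  show ?thesis
  proof (intro exI conjI allI impI)
    show "0 \<le> i + 2" using i(2) by simp
    fix j assume j: "even j \<and> i + 2 \<le> j"
    then have "V j = {0}" "V (j - 1) = {0}" using vanish by simp_all
    then show "inj_on (f j) (V j)" "g j ` V j = V (j - 1)" using j by simp_all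
  qed
qed

end

lemma zz_module_reflect:
  assumes "zz_module scale V f g"
  shows "zz_module scale (\<lambda>i. V (- i)) (\<lambda>i. g (- i)) (\<lambda>i. f (- i))"
  unfolding zz_module_def
proof (intro conjI allI impI)
  have vs: "vector_space scale" and fd: "\<forall>i. fd_subspace scale (V i)"
    and lin: "\<forall>i. even i \<longrightarrow>
      lin_between scale (V i) (V (i + 1)) (f i) \<and> lin_between scale (V i) (V (i - 1)) (g i)"
    using assms unfolding zz_module_def by auto
  show "vector_space scale" by (rule vs)
  fix i :: int
  show "fd_subspace scale (V (- i))" using fd by (rule spec)
  assume "even i"
  then have "even (- i)" by simp
  have shift: "- (i + 1) = - i - 1" "- (i - 1) = - i + 1" by simp_all
  show "lin_between scale (V (- i)) (V (- (i + 1))) (g (- i))"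
    "lin_between scale (V (- i)) (V (- (i - 1))) (f (- i))"
    unfolding shift using lin[rule_format, OF \<open>even (- i)\<close>] by simp_all
qed

lemma zz_submodule_reflect:
  assumes "zz_submodule scale (\<lambda>i. V (- i)) (\<lambda>i. g (- i)) (\<lambda>i. f (- i)) U"
  shows "zz_submodule scale V f g (\<lambda>i. U (- i))"
  unfolding zz_submodule_def
proof (intro conjI allI impI)
  have sub: "\<forall>i. module.subspace scale (U i) \<and> U i \<subseteq> V (- i)"
    and maps: "\<forall>i. even i \<longrightarrow> g (- i) ` U i \<subseteq> U (i + 1) \<and> f (- i) ` U i \<subseteq> U (i - 1)"
    using assms unfolding zz_submodule_def by auto
  fix i :: int
  show "module.subspace scale (U (- i))" "U (- i) \<subseteq> V i"
    using sub[rule_format, of "- i"] by simp_all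
  assume "even i"
  then have "even (- i)" by simp
  have shift: "- (i + 1) = - i - 1" "- (i - 1) = - i + 1" by simp_all
  show "f i ` U (- i) \<subseteq> U (- (i + 1))" "g i ` U (- i) \<subseteq> U (- (i - 1))"
    unfolding shift using maps[rule_format, OF \<open>even (- i)\<close>] by simp_all
qed

lemma zz_indecomposable_reflect:
  assumes "zz_indecomposable scale V f g"
  shows "zz_indecomposable scale (\<lambda>i. V (- i)) (\<lambda>i. g (- i)) (\<lambda>i. f (- i))"
  unfolding zz_indecomposable_def
proof (intro conjI notI)
  show "zz_nonzero (\<lambda>i. V (- i))"
    using assms unfolding zz_indecomposable_def zz_nonzero_def by (metis minus_minus)
next
  assume "\<exists>U W. zz_submodule scale (\<lambda>i. V (- i)) (\<lambda>i. g (- i)) (\<lambda>i. f (- i)) U \<and>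
      zz_submodule scale (\<lambda>i. V (- i)) (\<lambda>i. g (- i)) (\<lambda>i. f (- i)) W \<and>
      zz_nonzero U \<and> zz_nonzero W \<and>
      (\<forall>i. U i \<inter> W i = {0} \<and> {u + w | u w. u \<in> U i \<and> w \<in> W i} = V (- i))"
  then obtain U W where
    sub: "zz_submodule scale (\<lambda>i. V (- i)) (\<lambda>i. g (- i)) (\<lambda>i. f (- i)) U"
      "zz_submodule scale (\<lambda>i. V (- i)) (\<lambda>i. g (- i)) (\<lambda>i. f (- i)) W"
    and nonzero: "zz_nonzero U" "zz_nonzero W"
    and sum: "\<forall>i. U i \<inter> W i = {0} \<and> {u + w | u w. u \<in> U i \<and> w \<in> W i} = V (- i)"
    by blast
  have "zz_nonzero (\<lambda>i. U (- i))" "zz_nonzero (\<lambda>i. W (- i))"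
    using nonzero unfolding zz_nonzero_def by (metis minus_minus)+
  moreover have "\<forall>i. U (- i) \<inter> W (- i) = {0} \<and> {u + w | u w. u \<in> U (- i) \<and> w \<in> W (- i)} = V i"
    using sum by (metis minus_minus)
  ultimately show False
    using assms zz_submodule_reflect[OF sub(1)] zz_submodule_reflect[OF sub(2)]
    unfolding zz_indecomposable_def by blast
qed

theorem lemma3:
  fixes scale :: "'a::field \<Rightarrow> 'v::ab_group_add \<Rightarrow> 'v"
    and V :: "int \<Rightarrow> 'v set" and f g :: "int \<Rightarrow> 'v \<Rightarrow> 'v"
  assumes "zz_module scale V f g"
    and "zz_indecomposable scale V f g"
  shows "(\<exists>t::int. t \<ge> 0 \<and> (\<forall>i. even i \<and> i \<ge> t \<longrightarrow>
              inj_on (f i) (V i) \<and> g i ` V i = V (i - 1)))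
       \<and> (\<exists>s::int. s \<le> 0 \<and> (\<forall>i. even i \<and> i \<le> s \<longrightarrow>
              f i ` V i = V (i + 1) \<and> inj_on (g i) (V i)))"
proof
  interpret zigzag scale V f g by (rule zigzag.intro) (rule assms(1))
  show "\<exists>t::int. t \<ge> 0 \<and> (\<forall>i. even i \<and> i \<ge> t \<longrightarrow> inj_on (f i) (V i) \<and> g i ` V i = V (i - 1))"
    using eventually_inj_surj[OF assms(2)] .
next
  interpret reflected: zigzag scale "\<lambda>i. V (- i)" "\<lambda>i. g (- i)" "\<lambda>i. f (- i)"
    by (rule zigzag.intro) (rule zz_module_reflect[OF assms(1)])
  obtain t where t: "t \<ge> 0"
    "\<forall>i. even i \<and> t \<le> i \<longrightarrow> inj_on (g (- i)) (V (- i)) \<and> f (- i) ` V (- i) = V (- (i - 1))"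
    using reflected.eventually_inj_surj[OF zz_indecomposable_reflect[OF assms(2)]]
    by (elim exE conjE) (rule that)
  show "\<exists>s::int. s \<le> 0 \<and> (\<forall>i. even i \<and> i \<le> s \<longrightarrow> f i ` V i = V (i + 1) \<and> inj_on (g i) (V i))"
  proof (intro exI conjI allI impI)
    show "- t \<le> 0" using t(1) by simp
    fix i assume "even i \<and> i \<le> - t"
    then have "even (- i) \<and> t \<le> - i" by simp
    then have "inj_on (g (- (- i))) (V (- (- i))) \<and> f (- (- i)) ` V (- (- i)) = V (- (- i - 1))"
      by (rule t(2)[rule_format])
    then show "f i ` V i = V (i + 1)" "inj_on (g i) (V i)" by (simp_all add: algebra_simps)
  qed
qed

end
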